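(* Let $n\ge1$, $n<p<+\infty$ and $\gamma<p-1$. There exists $C=C(n,\gamma,p)>0$ such that for every $u\in C^\infty_c(\mathbb{R}^n_+)$ and every $x\in\mathbb{R}^n_+$, \[ |u(x)|\le C\,x_n^{1-\frac{n+\gamma}{p}}\Big(\int_{\mathbb{R}^n_+}|Du(z)|^pz_n^\gamma\,dz\Big)^{1/p}. \]
   Context: $\mathbb{R}^n_+=\mathbb{R}^{n-1}\times(0,+\infty)$, points $x=(x',x_n)$; $C^\infty_c(\mathbb{R}^n_+)$ denotes smooth functions with compact support contained in the open half-space. *)

theory Defs
  imports "HOL-Analysis.Analysis"
begin

text \<open>Points of R^n are vectors of type real^'n (n = CARD('n) \<ge> 1).
  A fixed coordinate index k plays the role of the last coordinate x_n.\<close>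

definition half_space :: "'n::finite \<Rightarrow> (real^'n) set" where
  "half_space k = {x. x $ k > 0}"

definition partial_deriv :: "'n::finite \<Rightarrow> (real^'n \<Rightarrow> real) \<Rightarrow> real^'n \<Rightarrow> real" where
  "partial_deriv i f x = frechet_derivative f (at x) (axis i 1)"

definition grad :: "(real^'n::finite \<Rightarrow> real) \<Rightarrow> real^'n \<Rightarrow> real^'n" where
  "grad f x = (\<chi> i. partial_deriv i f x)"

fun Ck :: "nat \<Rightarrow> (real^'n::finite \<Rightarrow> real) \<Rightarrow> bool" where
  "Ck 0 f = continuous_on UNIV f"
| "Ck (Suc k) f = (continuous_on UNIV f \<and> (\<forall>x. f differentiable (at x))
                   \<and> (\<forall>i. Ck k (partial_deriv i f)))"

definition smooth :: "(real^'n::finite \<Rightarrow> real) \<Rightarrow> bool" where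
  "smooth f = (\<forall>k. Ck k f)"

definition tsupport :: "(real^'n::finite \<Rightarrow> real) \<Rightarrow> (real^'n) set" where
  "tsupport f = closure {x. f x \<noteq> 0}"

definition Cc_inf :: "(real^'n::finite) set \<Rightarrow> (real^'n \<Rightarrow> real) set" where
  "Cc_inf S = {f. smooth f \<and> compact (tsupport f) \<and> tsupport f \<subseteq> S}"

end

theory Submission
  imports Defs
begin

(* Fix x with t = x_k > 0 and let E be the ball of radius t/2 centred at x - (3t/2) e_k: it lies
   outside the half-space, so u vanishes on it, its volume is comparable to t^n, and its points
   are within 2t of x.  For y in E, integrating Du along the segment from x to y gives
   |u x| <= 2t int_0^1 |Du(x + l(y - x))| dl.  Young's inequality with a free parameter e splits
   the integrand into |Du|^p z_k^gamma l^(ap) and z_k^(-b) l^(-c), where c = aq and b = gamma q/p.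
   Averaging over y in E, the homothety z = x + l(y - x) turns the first part into l^(ap - n) times
   the weighted energy, and the second part is a Beta-type integral of size t^(-b).  Minimising
   over e (Hoelder's inequality in disguise) yields |u x| <= A^(1/p) B^(1/q), which scales as
   claimed.  Both l-integrals converge for (n - 1)/p < a < 1/q, an interval that is non-empty
   exactly because n < p. *)

section \<open>Compactly supported smooth functions\<close>

lemma Cc_inf_differentiable:
  assumes "u \<in> Cc_inf S"
  shows "u differentiable (at z)"
proof -
  have "Ck (Suc 0) u" using assms by (simp add: Cc_inf_def smooth_def)
  then show ?thesis by simp
qed

lemma Cc_inf_continuous_grad:
  assumes "u \<in> Cc_inf S"
  shows "continuous_on UNIV (grad u)"
proof -
  have "Ck (Suc (Suc 0)) u" using assms by (simp add: Cc_inf_def smooth_def)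
  then have "continuous_on UNIV (partial_deriv i u)" for i by simp
  then show ?thesis unfolding grad_def by (intro continuous_on_vec_lambda)
qed

lemma Cc_inf_eq_0:
  assumes "u \<in> Cc_inf S" "z \<notin> S"
  shows "u z = 0"
proof -
  have "tsupport u \<subseteq> S" using assms(1) by (simp add: Cc_inf_def)
  then have "z \<notin> tsupport u" using assms(2) by blast
  then show ?thesis using closure_subset[of "{x. u x \<noteq> 0}"] by (auto simp: tsupport_def)
qed

lemma grad_eq_0_outside_tsupport:
  fixes u :: "real^'n::finite \<Rightarrow> real"
  assumes "z \<notin> tsupport u"
  shows "grad u z = 0"
proof -
  have "open (- tsupport u)" by (simp add: tsupport_def open_Compl)
  moreover have "u w = 0" if "w \<in> - tsupport u" for w
    using that closure_subset[of "{x. u x \<noteq> 0}"] by (auto simp: tsupport_def)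
  ultimately have "(u has_derivative (\<lambda>h. 0)) (at z)"
    using has_derivative_transform_within_open[OF has_derivative_const, where s = "- tsupport u" and g = u]
      assms by auto
  then have "frechet_derivative u (at z) = (\<lambda>h. 0)" using frechet_derivative_at by metis
  then show ?thesis by (simp add: grad_def partial_deriv_def vec_eq_iff)
qed

lemma Cc_inf_grad_eq_0:
  assumes "u \<in> Cc_inf S" "z \<notin> S"
  shows "grad u z = 0"
proof -
  have "tsupport u \<subseteq> S" using assms(1) by (simp add: Cc_inf_def)
  then show ?thesis using assms(2) grad_eq_0_outside_tsupport by blast
qed

lemma has_derivative_grad:
  fixes u :: "real^'n::finite \<Rightarrow> real"
  assumes "u differentiable (at z)"
  shows "(u has_derivative (\<lambda>h. grad u z \<bullet> h)) (at z)"
proof -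
  let ?f = "frechet_derivative u (at z)"
  have d: "(u has_derivative ?f) (at z)" using assms frechet_derivative_works by blast
  then have lin: "linear ?f" using has_derivative_linear by blast
  have "?f h = grad u z \<bullet> h" for h
  proof -
    have "?f h = ?f (\<Sum>i\<in>UNIV. h$i *\<^sub>R axis i 1)"
      by (metis (no_types) basis_expansion vector_scaleR_component scalar_mult_eq_scaleR)
    also have "\<dots> = (\<Sum>i\<in>UNIV. h$i * ?f (axis i 1))"
      using lin by (simp add: linear_sum linear_scale)
    also have "\<dots> = grad u z \<bullet> h"
      by (simp add: grad_def partial_deriv_def inner_vec_def mult.commute)
    finally show ?thesis .
  qed
  then have "?f = (\<lambda>h. grad u z \<bullet> h)" by auto
  with d show ?thesis by simp
qed

lemma abs_diff_le_nn_integral_segment: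
  fixes u :: "real^'n::finite \<Rightarrow> real"
  assumes diff: "\<And>z. u differentiable (at z)" and cont: "continuous_on UNIV (grad u)"
  shows "ennreal \<bar>u y - u x\<bar> \<le>
    (\<integral>\<^sup>+l. indicator {0<..<1} l * (norm (grad u (x + l *\<^sub>R (y - x))) * norm (y - x)) \<partial>lborel)"
proof -
  define P where "P = (\<lambda>l::real. x + l *\<^sub>R (y - x))"
  define g where "g = (\<lambda>l. grad u (P l) \<bullet> (y - x))"
  define h where "h = (\<lambda>l. norm (grad u (P l)) * norm (y - x))"
  have "continuous_on UNIV h"
    unfolding h_def P_def by (intro continuous_intros continuous_on_compose2[OF cont]) auto
  then have h_int: "h integrable_on {0..1}"
    by (intro integrable_continuous_interval) (auto intro: continuous_on_subset)
  have "((\<lambda>l. u (P l)) has_vector_derivative g l) (at l within {0..1})" for l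
  proof -
    have "(P has_derivative (\<lambda>h. h *\<^sub>R (y - x))) (at l)"
      unfolding P_def by (auto intro!: derivative_eq_intros)
    from has_derivative_compose[OF this has_derivative_grad[OF diff]]
    have "((\<lambda>l. u (P l)) has_derivative (\<lambda>h. h *\<^sub>R g l)) (at l)"
      by (simp add: o_def g_def inner_scaleR_right)
    then show ?thesis
      unfolding has_vector_derivative_def using has_derivative_at_withinI by blast
  qed
  then have "(g has_integral (u (P 1) - u (P 0))) {0..1}"
    by (intro fundamental_theorem_of_calculus) auto
  then have g_int: "(g has_integral (u y - u x)) {0..1}" by (simp add: P_def)
  have "\<bar>u y - u x\<bar> = norm (integral {0..1} g)" using g_int by (simp add: integral_unique)
  also have "\<dots> \<le> integral {0..1} h"
    using g_int h_int by (intro integral_norm_bound_integral)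
      (auto simp: g_def h_def intro: Cauchy_Schwarz_ineq2)
  finally have le: "\<bar>u y - u x\<bar> \<le> integral {0..1} h" .
  have "(h has_integral integral {0..1} h) {0<..<1}"
    using h_int has_integral_open_interval[of h _ 0 1] by (simp add: box_real has_integral_integral)
  then have "(\<integral>\<^sup>+l. indicator {0<..<1} l * h l \<partial>lborel) = ennreal (integral {0..1} h)"
    by (intro nn_integral_has_integral_lebesgue) (auto simp: h_def)
  with le show ?thesis by (simp add: h_def P_def)
qed

section \<open>One-dimensional integrals\<close>

lemma nn_integral_powr_unit_interval:
  assumes "d > -1"
  shows "(\<integral>\<^sup>+l. indicator {0<..<1::real} l * l powr d \<partial>lborel) = ennreal (1 / (d + 1))"
proof -
  have "((\<lambda>l::real. l powr d) has_integral (1 / (d + 1))) {0..1}"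
    using has_integral_powr_from_0[of d 1] assms by simp
  then have "((\<lambda>l::real. l powr d) has_integral (1 / (d + 1))) {0<..<1}"
    using has_integral_open_interval[of "\<lambda>l::real. l powr d" _ 0 1] by (simp add: box_real)
  then show ?thesis by (intro nn_integral_has_integral_lebesgue) auto
qed

lemma nn_integral_one_minus_powr_unit_interval:
  assumes "d > -1"
  shows "(\<integral>\<^sup>+l. indicator {0<..<1::real} l * (1 - l) powr d \<partial>lborel) = ennreal (1 / (d + 1))"
proof -
  have "(\<integral>\<^sup>+l. indicator {0<..<1::real} l * l powr d \<partial>lborel)
     = ennreal \<bar>-1\<bar> * (\<integral>\<^sup>+l. indicator {0<..<1::real} (1 + (-1) * l) * (1 + (-1) * l) powr d \<partial>lborel)"
    by (rule nn_integral_real_affine) auto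
  also have "(\<lambda>l. indicator {0<..<1::real} (1 + (-1) * l) * (1 + (-1) * l) powr d)
      = (\<lambda>l. indicator {0<..<1::real} l * (1 - l) powr d)"
    by (auto simp: indicator_def fun_eq_iff)
  finally show ?thesis using nn_integral_powr_unit_interval[OF assms] by simp
qed

lemma beta_integrand_le:
  fixes b c m :: real
  assumes "0 < m" "m < 1" "0 < c"
  shows "(1 - m) powr (-b) * m powr (-c) \<le> 2 powr (\<bar>b\<bar> + c) * (m powr (-c) + (1 - m) powr (-b))"
proof (cases "m \<le> 1/2")
  case True
  have "(1 - m) powr (-b) \<le> 2 powr \<bar>b\<bar>"
  proof (cases "b \<ge> 0")
    case True
    have "(1 - m) powr (-b) \<le> (1/2) powr (-b)"
      using \<open>m \<le> 1/2\<close> assms True by (intro powr_mono2') auto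
    also have "\<dots> = 2 powr b" by (simp add: powr_minus_divide powr_divide)
    finally show ?thesis using True by simp
  next
    case False
    have "(1 - m) powr (-b) \<le> 1 powr (-b)" using assms False by (intro powr_mono2) auto
    also have "\<dots> \<le> 2 powr \<bar>b\<bar>" by (simp add: ge_one_powr_ge_zero)
    finally show ?thesis .
  qed
  also have "\<dots> \<le> 2 powr (\<bar>b\<bar> + c)" using assms by simp
  finally have "(1 - m) powr (-b) * m powr (-c) \<le> 2 powr (\<bar>b\<bar> + c) * m powr (-c)"
    by (intro mult_right_mono) auto
  also have "\<dots> \<le> 2 powr (\<bar>b\<bar> + c) * (m powr (-c) + (1 - m) powr (-b))"
    by (intro mult_left_mono) auto
  finally show ?thesis .
next
  case False
  have "m powr (-c) \<le> (1/2) powr (-c)"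
    using False assms by (intro powr_mono2') auto
  also have "\<dots> = 2 powr c" by (simp add: powr_minus_divide powr_divide)
  also have "\<dots> \<le> 2 powr (\<bar>b\<bar> + c)" by simp
  finally have "(1 - m) powr (-b) * m powr (-c) \<le> (1 - m) powr (-b) * 2 powr (\<bar>b\<bar> + c)"
    by (intro mult_left_mono) auto
  also have "\<dots> \<le> 2 powr (\<bar>b\<bar> + c) * (m powr (-c) + (1 - m) powr (-b))"
    by (simp add: algebra_simps)
  finally show ?thesis .
qed

definition beta_bound :: "real \<Rightarrow> real \<Rightarrow> real" where
  "beta_bound b c = 2 powr (\<bar>b\<bar> + c) * (1 / (1 - c) + 1 / (1 - b))"

lemma beta_bound_pos: "b < 1 \<Longrightarrow> c < 1 \<Longrightarrow> 0 < beta_bound b c"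
  by (auto simp: beta_bound_def intro!: mult_pos_pos add_pos_pos)

lemma nn_integral_beta_le:
  fixes b c :: real
  assumes "b < 1" "0 < c" "c < 1"
  shows "(\<integral>\<^sup>+m. indicator {0<..<1} m * ((1 - m) powr (-b) * m powr (-c)) \<partial>lborel)
    \<le> ennreal (beta_bound b c)"
proof -
  let ?K = "2 powr (\<bar>b\<bar> + c)"
  have "(\<integral>\<^sup>+m. indicator {0<..<1} m * ((1 - m) powr (-b) * m powr (-c)) \<partial>lborel)
     \<le> (\<integral>\<^sup>+m. ennreal ?K * (indicator {0<..<1} m * m powr (-c))
          + ennreal ?K * (indicator {0<..<1} m * (1 - m) powr (-b)) \<partial>lborel)"
  proof (intro nn_integral_mono)
    fix m :: real
    show "ennreal (indicator {0<..<1} m * ((1 - m) powr (-b) * m powr (-c)))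
      \<le> ennreal ?K * (indicator {0<..<1} m * m powr (-c))
          + ennreal ?K * (indicator {0<..<1} m * (1 - m) powr (-b))"
      using beta_integrand_le[of m c b] assms
      by (cases "m \<in> {0<..<1}")
        (simp_all add: ennreal_mult''[symmetric] ennreal_plus[symmetric] distrib_left del: ennreal_plus)
  qed
  also have "\<dots> = ennreal ?K * (\<integral>\<^sup>+m. indicator {0<..<1} m * m powr (-c) \<partial>lborel)
      + ennreal ?K * (\<integral>\<^sup>+m. indicator {0<..<1} m * (1 - m) powr (-b) \<partial>lborel)"
    by (simp add: nn_integral_add nn_integral_cmult)
  also have "\<dots> = ennreal (beta_bound b c)"
    using nn_integral_powr_unit_interval[of "-c"] nn_integral_one_minus_powr_unit_interval[of "-b"] assms
    by (simp add: beta_bound_def ennreal_mult''[symmetric] ennreal_plus[symmetric] distrib_left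
        del: ennreal_plus)
  finally show ?thesis .
qed

lemma nn_integral_segment_weight_le:
  fixes b c t s :: real
  assumes "b < 1" "0 < c" "c < 1" "0 < t" "t \<le> s"
  shows "(\<integral>\<^sup>+l. indicator {0<..<1} l *
            ((if 0 < t - l * s then (t - l * s) powr (-b) else 0) * l powr (-c)) \<partial>lborel)
    \<le> ennreal (t powr (-b) * beta_bound b c)"
proof -
  define f where "f l = indicator {0<..<1} l *
    ((if 0 < t - l * s then (t - l * s) powr (-b) else 0) * l powr (-c))" for l
  define r where "r = t / s"
  have r: "0 < r" "r \<le> 1" using assms by (auto simp: r_def)
  have f_le: "f (r * m) \<le> t powr (-b) * r powr (-c) *
      (indicator {0<..<1} m * ((1 - m) powr (-b) * m powr (-c)))" for m
  proof -
    have rm: "t - r * m * s = t * (1 - m)" using assms by (simp add: r_def algebra_simps)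
    show ?thesis
    proof (cases "m \<in> {0<..<1}")
      case True
      have "r * m \<le> m" "m < 1" using r True by (auto intro: mult_left_le_one_le)
      then have "r * m < 1" by linarith
      then show ?thesis using True r assms rm by (simp add: f_def powr_mult mult_ac)
    next
      case False
      then have "m \<le> 0 \<or> 1 \<le> m" by auto
      then have "r * m \<le> 0 \<or> t * (1 - m) \<le> 0"
        using r \<open>0 < t\<close> by (auto simp: mult_nonneg_nonpos)
      then have "f (r * m) = 0" using rm by (auto simp: f_def)
      then show ?thesis using False by simp
    qed
  qed
  have "(\<integral>\<^sup>+l. f l \<partial>lborel) = ennreal r * (\<integral>\<^sup>+m. f (r * m) \<partial>lborel)"
    using r by (subst nn_integral_real_affine[where c = r and t = 0]) (auto simp: f_def)
  also have "\<dots> \<le> ennreal r * (\<integral>\<^sup>+m. ennreal (t powr (-b) * r powr (-c)) *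
      (indicator {0<..<1} m * ((1 - m) powr (-b) * m powr (-c))) \<partial>lborel)"
    using f_le by (intro mult_left_mono nn_integral_mono)
      (auto simp: ennreal_mult[symmetric] intro!: ennreal_leI)
  also have "\<dots> \<le> ennreal r * (ennreal (t powr (-b) * r powr (-c)) * ennreal (beta_bound b c))"
    using assms by (simp add: nn_integral_cmult mult_left_mono nn_integral_beta_le)
  also have "\<dots> = ennreal (r powr (1 - c) * (t powr (-b) * beta_bound b c))"
    using r beta_bound_pos[of b c] assms
    by (simp add: ennreal_mult[symmetric] powr_diff powr_minus field_simps)
  also have "\<dots> \<le> ennreal (t powr (-b) * beta_bound b c)"
    using r beta_bound_pos[of b c] assms
    by (intro ennreal_leI mult_left_le_one_le powr_le1) auto
  finally show ?thesis by (simp add: f_def)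
qed

section \<open>Young's inequality\<close>

lemma Young_inequality_weighted:
  fixes p q e F w :: real
  assumes pq: "p > 1" "q > 1" "1/p + 1/q = 1" and "e > 0" "F \<ge> 0" "w > 0"
  shows "F \<le> e powr p / p * (F powr p * w) + e powr (-q) / q * w powr (-(q/p))"
proof -
  define \<alpha> where "\<alpha> = e * F * w powr (1/p)"
  define \<beta> where "\<beta> = inverse e * w powr (-(1/p))"
  have "\<alpha> * \<beta> = F"
    using assms by (simp add: \<alpha>_def \<beta>_def powr_minus field_simps)
  moreover have "\<alpha> powr p = e powr p * (F powr p * w)"
    using assms by (simp add: \<alpha>_def powr_mult powr_powr)
  moreover have "\<beta> powr q = e powr (-q) * w powr (-(q/p))"
    using assms by (simp add: \<beta>_def powr_mult powr_powr powr_minus inverse_powr)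
  moreover have "\<alpha> * \<beta> \<le> \<alpha> powr p / p + \<beta> powr q / q"
    using assms by (intro Youngs_inequality) (auto simp: \<alpha>_def \<beta>_def)
  ultimately show ?thesis by simp
qed

lemma le_powr_product_if_Young_bounds:
  fixes p q A B X :: real
  assumes pq: "p > 1" "q > 1" "1/p + 1/q = 1" and "A \<ge> 0" "B > 0"
    and Young: "\<And>e. e > 0 \<Longrightarrow> X \<le> e powr p * A / p + e powr (-q) * B / q"
  shows "X \<le> A powr (1/p) * B powr (1/q)"
proof (cases "A = 0")
  case True
  show ?thesis
  proof (rule ccontr)
    assume "\<not> ?thesis"
    then have X: "X > 0" using True by simp
    define e where "e = (2 * B / (q * X)) powr (1/q)"
    have e: "e > 0" using X assms unfolding e_def by auto
    have "e powr (-q) = q * X / (2 * B)"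
      unfolding e_def using X assms by (simp add: powr_powr powr_minus_divide)
    then have "e powr (-q) * B / q = X / 2" using assms by (simp add: field_simps)
    with Young[OF e] True X show False by simp
  qed
next
  case False
  then have A: "A > 0" using assms by simp
  define e where "e = (B / A) powr (1/(p*q))"
  have e: "e > 0" using A assms by (simp add: e_def)
  have conj: "1 - 1/q = 1/p" "1 - 1/p = 1/q" using pq by linarith+
  have "e powr p * A = B powr (1/q) * A powr (1 - 1/q)"
    using A assms by (simp add: e_def powr_powr powr_divide powr_diff)
  moreover have "e powr (-q) * B = A powr (1/p) * B powr (1 - 1/p)"
    using A assms by (simp add: e_def powr_powr powr_divide powr_diff powr_minus_divide)
  ultimately have "e powr p * A / p + e powr (-q) * B / q = A powr (1/p) * B powr (1/q) * (1/p + 1/q)"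
    unfolding conj by (simp add: field_simps)
  with Young[OF e] pq show ?thesis by simp
qed

section \<open>The pointwise estimate\<close>

lemma nn_integral_homothety:
  fixes G :: "real^'n::finite \<Rightarrow> real" and l :: real
  assumes [measurable]: "G \<in> borel_measurable borel" and l: "l > 0"
  shows "(\<integral>\<^sup>+y. ennreal (G (x + l *\<^sub>R (y - x))) \<partial>lborel)
    = ennreal (l powr (- real CARD('n))) * (\<integral>\<^sup>+z. ennreal (G z) \<partial>lborel)"
proof -
  have "(\<integral>\<^sup>+z. ennreal (G z) \<partial>lborel) =
     (\<integral>\<^sup>+z. ennreal (G z) \<partial>(density (distr lborel borel (\<lambda>y. (x - l *\<^sub>R x) + l *\<^sub>R y))
       (\<lambda>_. \<bar>l\<bar> ^ DIM(real^'n))))"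
    using lborel_affine[of l "x - l *\<^sub>R x"] l by simp
  also have "\<dots> = ennreal (l ^ CARD('n)) * (\<integral>\<^sup>+y. ennreal (G (x + l *\<^sub>R (y - x))) \<partial>lborel)"
    using l by (simp add: nn_integral_density nn_integral_distr nn_integral_cmult algebra_simps)
  finally have "(\<integral>\<^sup>+z. ennreal (G z) \<partial>lborel)
    = ennreal (l ^ CARD('n)) * (\<integral>\<^sup>+y. ennreal (G (x + l *\<^sub>R (y - x))) \<partial>lborel)" .
  moreover have "ennreal (l powr (- real CARD('n))) * ennreal (l ^ CARD('n)) = 1"
    using l by (simp add: ennreal_mult[symmetric] powr_minus powr_realpow)
  ultimately show ?thesis by (simp add: mult.assoc[symmetric])
qed

lemma borel_measurable_vec_nth [measurable]:
  "(\<lambda>z::real^'n::finite. z $ k) \<in> borel_measurable borel"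
  by (intro borel_measurable_continuous_onI continuous_intros)

definition half_space_weight :: "'n::finite \<Rightarrow> real \<Rightarrow> real^'n \<Rightarrow> real" where
  "half_space_weight k \<beta> z = indicator (half_space k) z * (z $ k) powr \<beta>"

lemma borel_measurable_half_space_weight [measurable]:
  "half_space_weight k \<beta> \<in> borel_measurable borel"
  unfolding half_space_weight_def half_space_def by measurable

lemma half_space_weight_nonneg: "0 \<le> half_space_weight k \<beta> z"
  by (simp add: half_space_weight_def)

lemma borel_measurable_Cc_inf_grad [measurable]:
  assumes "u \<in> Cc_inf S"
  shows "grad u \<in> borel_measurable borel"
  using Cc_inf_continuous_grad[OF assms] by (rule borel_measurable_continuous_onI)

lemma integrable_weighted_grad_powr:
  fixes u :: "real^'n::finite \<Rightarrow> real"
  assumes u: "u \<in> Cc_inf (half_space k)" and "p > 0"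
  shows "integrable lborel (\<lambda>z. norm (grad u z) powr p * half_space_weight k \<gamma> z)"
proof -
  let ?K = "tsupport u" and ?h = "\<lambda>z. norm (grad u z) powr p * (z $ k) powr \<gamma>"
  have K: "compact ?K" "?K \<subseteq> half_space k" using u by (auto simp: Cc_inf_def)
  have "continuous_on ?K ?h"
  proof (intro continuous_on_mult continuous_on_powr')
    show "continuous_on ?K (\<lambda>z. norm (grad u z))"
      using Cc_inf_continuous_grad[OF u] by (auto intro: continuous_on_norm continuous_on_subset)
    show "\<forall>z\<in>?K. 0 \<le> z $ k \<and> (z $ k = 0 \<longrightarrow> 0 < \<gamma>)"
      using K(2) by (auto simp: half_space_def)
  qed (use \<open>p > 0\<close> in \<open>auto intro!: continuous_intros\<close>)
  then have "integrable lborel (\<lambda>z. indicator ?K z *\<^sub>R ?h z)"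
    by (rule borel_integrable_compact[OF K(1)])
  moreover have "(\<lambda>z. indicator ?K z *\<^sub>R ?h z)
      = (\<lambda>z. norm (grad u z) powr p * half_space_weight k \<gamma> z)"
    using K(2) grad_eq_0_outside_tsupport[of _ u] \<open>p > 0\<close>
    by (force simp: half_space_weight_def indicator_def)
  ultimately show ?thesis by simp
qed

lemma nn_integral_weighted_grad_powr:
  fixes u :: "real^'n::finite \<Rightarrow> real"
  assumes u: "u \<in> Cc_inf (half_space k)" and "p > 0"
  shows "(\<integral>\<^sup>+z. norm (grad u z) powr p * half_space_weight k \<gamma> z \<partial>lborel)
    = ennreal (LINT z:half_space k|lborel. norm (grad u z) powr p * (z $ k) powr \<gamma>)"
  using integrable_weighted_grad_powr[OF assms]
  by (subst nn_integral_eq_integral)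
    (auto simp: half_space_weight_nonneg set_lebesgue_integral_def half_space_weight_def mult_ac)

lemma nn_integral_segment_homothety:
  fixes G :: "real^'n::finite \<Rightarrow> real" and x :: "real^'n"
  assumes [measurable]: "G \<in> borel_measurable borel" and r: "r > real CARD('n) - 1"
  shows "(\<integral>\<^sup>+y. (\<integral>\<^sup>+l. indicator {0<..<1} l * (G (x + l *\<^sub>R (y - x)) * l powr r) \<partial>lborel) \<partial>lborel)
    = (\<integral>\<^sup>+z. G z \<partial>lborel) * ennreal (1 / (r - real CARD('n) + 1))"
proof -
  have "(\<integral>\<^sup>+y. (\<integral>\<^sup>+l. indicator {0<..<1} l * (G (x + l *\<^sub>R (y - x)) * l powr r) \<partial>lborel) \<partial>lborel)
    = (\<integral>\<^sup>+l. (\<integral>\<^sup>+y. indicator {0<..<1} l * (G (x + l *\<^sub>R (y - x)) * l powr r) \<partial>lborel) \<partial>lborel)"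
    by (rule pair_sigma_finite.Fubini'[symmetric])
      (auto intro: pair_sigma_finite.intro sigma_finite_lborel)
  also have "\<dots> = (\<integral>\<^sup>+l. (\<integral>\<^sup>+z. G z \<partial>lborel)
      * ennreal (indicator {0<..<1} l * l powr (r - real CARD('n))) \<partial>lborel)"
  proof (intro nn_integral_cong)
    fix l :: real
    show "(\<integral>\<^sup>+y. indicator {0<..<1} l * (G (x + l *\<^sub>R (y - x)) * l powr r) \<partial>lborel)
      = (\<integral>\<^sup>+z. G z \<partial>lborel) * ennreal (indicator {0<..<1} l * l powr (r - real CARD('n)))"
    proof (cases "l \<in> {0<..<1}")
      case True
      then have "(\<integral>\<^sup>+y. indicator {0<..<1} l * (G (x + l *\<^sub>R (y - x)) * l powr r) \<partial>lborel)
          = ennreal (l powr r) * (\<integral>\<^sup>+y. G (x + l *\<^sub>R (y - x)) \<partial>lborel)"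
        by (simp add: ennreal_mult' mult.commute nn_integral_cmult)
      also have "\<dots> = ennreal (l powr r) * ennreal (l powr (- real CARD('n))) * (\<integral>\<^sup>+z. G z \<partial>lborel)"
        using True by (simp add: nn_integral_homothety mult.assoc)
      finally show ?thesis
        using True by (simp add: ennreal_mult[symmetric] powr_diff powr_minus divide_inverse mult_ac)
    qed simp
  qed
  also have "\<dots> = (\<integral>\<^sup>+z. G z \<partial>lborel) * ennreal (1 / (r - real CARD('n) + 1))"
    using nn_integral_powr_unit_interval[of "r - real CARD('n)"] r by (simp add: nn_integral_cmult)
  finally show ?thesis .
qed

lemma norm_grad_le_Young_split:
  fixes u :: "real^'n::finite \<Rightarrow> real"
  assumes u: "u \<in> Cc_inf (half_space k)"
    and pq: "p > 1" "q > 1" "1/p + 1/q = 1" and "e > 0" "l > 0"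
    and c: "c = a * q" and b: "b = \<gamma> * q / p"
  shows "norm (grad u z) \<le> e powr p / p * (norm (grad u z) powr p * half_space_weight k \<gamma> z * l powr (a * p))
    + e powr (-q) / q * (half_space_weight k (-b) z * l powr (-c))"
proof (cases "z \<in> half_space k")
  case True
  let ?w = "(z $ k) powr \<gamma> * l powr (a * p)"
  have "z $ k > 0" using True by (simp add: half_space_def)
  then have "?w powr (-(q/p)) = (z $ k) powr (-b) * l powr (-c)"
    using \<open>l > 0\<close> pq by (simp add: powr_mult powr_powr b c)
  then show ?thesis
    using Young_inequality_weighted[OF pq \<open>e > 0\<close> norm_ge_zero[of "grad u z"], of ?w] \<open>z $ k > 0\<close> \<open>l > 0\<close> True
    by (simp add: half_space_weight_def mult_ac)
next
  case False
  then show ?thesis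
    using Cc_inf_grad_eq_0[OF u False] pq \<open>e > 0\<close> \<open>l > 0\<close>
    by (simp add: half_space_weight_def)
qed

lemma abs_le_Young_split_along_segment:
  fixes u :: "real^'n::finite \<Rightarrow> real"
  assumes u: "u \<in> Cc_inf (half_space k)" and "u y = 0" and R: "norm (y - x) \<le> R"
    and pq: "p > 1" "q > 1" "1/p + 1/q = 1" and "e > 0"
    and c: "c = a * q" and b: "b = \<gamma> * q / p"
  shows "ennreal \<bar>u x\<bar> \<le> ennreal (R * e powr p / p) * (\<integral>\<^sup>+l. indicator {0<..<1} l *
        (norm (grad u (x + l *\<^sub>R (y - x))) powr p * half_space_weight k \<gamma> (x + l *\<^sub>R (y - x))
          * l powr (a * p)) \<partial>lborel)
    + ennreal (R * e powr (-q) / q) * (\<integral>\<^sup>+l. indicator {0<..<1} l *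
        (half_space_weight k (-b) (x + l *\<^sub>R (y - x)) * l powr (-c)) \<partial>lborel)"
proof -
  define z where "z l = x + l *\<^sub>R (y - x)" for l :: real
  define f where "f l = indicator {0<..<1} l *
    (norm (grad u (z l)) powr p * half_space_weight k \<gamma> (z l) * l powr (a * p))" for l
  define g where "g l = indicator {0<..<1} l * (half_space_weight k (-b) (z l) * l powr (-c))" for l
  define \<alpha> where "\<alpha> = R * e powr p / p"
  define \<beta> where "\<beta> = R * e powr (-q) / q"
  have [measurable]: "grad u \<in> borel_measurable borel" using u by measurable
  have fg: "0 \<le> f l" "0 \<le> g l" for l by (simp_all add: f_def g_def half_space_weight_nonneg)
  have "0 \<le> R" using R norm_ge_zero order_trans by blast
  then have \<alpha>\<beta>: "0 \<le> \<alpha>" "0 \<le> \<beta>" using pq by (simp_all add: \<alpha>_def \<beta>_def)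
  have "ennreal \<bar>u x\<bar> = ennreal \<bar>u y - u x\<bar>" using \<open>u y = 0\<close> by simp
  also have "\<dots> \<le> (\<integral>\<^sup>+l. indicator {0<..<1} l * (norm (grad u (z l)) * norm (y - x)) \<partial>lborel)"
    unfolding z_def using u
    by (intro abs_diff_le_nn_integral_segment Cc_inf_differentiable Cc_inf_continuous_grad)
  also have "\<dots> \<le> (\<integral>\<^sup>+l. ennreal (\<alpha> * f l + \<beta> * g l) \<partial>lborel)"
  proof (intro nn_integral_mono ennreal_leI)
    fix l :: real
    show "indicator {0<..<1} l * (norm (grad u (z l)) * norm (y - x)) \<le> \<alpha> * f l + \<beta> * g l"
    proof (cases "l \<in> {0<..<1}")
      case True
      have "norm (grad u (z l)) * norm (y - x) \<le> norm (grad u (z l)) * R"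
        using R by (simp add: mult_left_mono)
      also have "\<dots> \<le> (e powr p / p * (norm (grad u (z l)) powr p * half_space_weight k \<gamma> (z l) * l powr (a * p))
          + e powr (-q) / q * (half_space_weight k (-b) (z l) * l powr (-c))) * R"
        using norm_grad_le_Young_split[OF u pq \<open>e > 0\<close> _ c b, of l "z l"] True \<open>0 \<le> R\<close>
        by (intro mult_right_mono) auto
      also have "\<dots> = \<alpha> * f l + \<beta> * g l"
        using True by (simp add: f_def g_def \<alpha>_def \<beta>_def algebra_simps)
      finally show ?thesis using True by simp
    qed (use \<alpha>\<beta> fg in simp)
  qed
  also have "\<dots> = ennreal \<alpha> * (\<integral>\<^sup>+l. f l \<partial>lborel) + ennreal \<beta> * (\<integral>\<^sup>+l. g l \<partial>lborel)"
    using \<alpha>\<beta> fg by (simp add: z_def f_def g_def ennreal_mult nn_integral_add nn_integral_cmult)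
  finally show ?thesis by (simp add: z_def f_def g_def \<alpha>_def \<beta>_def)
qed

lemma lower_ball_subset:
  fixes x :: "real^'n::finite"
  assumes "t = x $ k" "t > 0"
  shows "ball (x - (3 * t / 2) *\<^sub>R axis k 1) (t / 2) \<subseteq> {y. y $ k < 0 \<and> norm (y - x) \<le> 2 * t}"
proof
  fix y assume "y \<in> ball (x - (3 * t / 2) *\<^sub>R axis k 1) (t / 2)"
  then have d: "norm (y - (x - (3 * t / 2) *\<^sub>R axis k 1)) < t / 2"
    by (simp add: dist_norm norm_minus_commute)
  have "\<bar>y $ k - t + 3 * t / 2\<bar> \<le> norm (y - (x - (3 * t / 2) *\<^sub>R axis k 1))"
    using component_le_norm_cart[of "y - (x - (3 * t / 2) *\<^sub>R axis k 1)" k] assms(1)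
    by (simp add: axis_def)
  moreover have "norm (y - x) \<le> norm (y - (x - (3 * t / 2) *\<^sub>R axis k 1)) + 3 * t / 2"
    using norm_triangle_ineq[of "y - (x - (3 * t / 2) *\<^sub>R axis k 1)" "- (3 * t / 2) *\<^sub>R axis k 1"]
      assms(2) by simp
  ultimately show "y \<in> {y. y $ k < 0 \<and> norm (y - x) \<le> 2 * t}" using d by auto
qed

lemma nn_integral_segment_half_space_weight_le:
  fixes x y :: "real^'n::finite"
  assumes "0 < x $ k" "y $ k \<le> 0" "b < 1" "0 < c" "c < 1"
  shows "(\<integral>\<^sup>+l. indicator {0<..<1} l * (half_space_weight k (-b) (x + l *\<^sub>R (y - x)) * l powr (-c)) \<partial>lborel)
    \<le> ennreal ((x $ k) powr (-b) * beta_bound b c)"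
proof -
  have "(x + l *\<^sub>R (y - x)) $ k = x $ k - l * (x $ k - y $ k)" for l
    by (simp add: algebra_simps)
  then have "(\<integral>\<^sup>+l. indicator {0<..<1} l * (half_space_weight k (-b) (x + l *\<^sub>R (y - x)) * l powr (-c)) \<partial>lborel)
    = (\<integral>\<^sup>+l. indicator {0<..<1} l * ((if 0 < x $ k - l * (x $ k - y $ k)
        then (x $ k - l * (x $ k - y $ k)) powr (-b) else 0) * l powr (-c)) \<partial>lborel)"
    by (auto simp: half_space_weight_def half_space_def indicator_def intro!: nn_integral_cong)
  also have "\<dots> \<le> ennreal ((x $ k) powr (-b) * beta_bound b c)"
    using assms by (intro nn_integral_segment_weight_le) auto
  finally show ?thesis .
qed

lemma le_of_pointwise_bound_on_set:
  fixes E :: "'a::euclidean_space set" and T :: "'a \<Rightarrow> ennreal"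
  assumes E: "E \<in> sets lborel" "emeasure lborel E = ennreal V" "V > 0"
    and [measurable]: "T \<in> borel_measurable borel" and T: "(\<integral>\<^sup>+y. T y \<partial>lborel) = ennreal J"
    and bound: "\<And>y. y \<in> E \<Longrightarrow> ennreal X \<le> ennreal \<alpha> * T y + ennreal \<beta>"
    and nonneg: "\<alpha> \<ge> 0" "\<beta> \<ge> 0" "J \<ge> 0"
  shows "X \<le> \<alpha> * J / V + \<beta>"
proof -
  have "ennreal (V * X) = ennreal X * emeasure lborel E"
    using E by (simp add: ennreal_mult' mult.commute)
  also have "\<dots> = (\<integral>\<^sup>+y. ennreal X * indicator E y \<partial>lborel)"
    using E by (simp add: nn_integral_cmult_indicator)
  also have "\<dots> \<le> (\<integral>\<^sup>+y. ennreal \<alpha> * T y + ennreal \<beta> * indicator E y \<partial>lborel)"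
    using bound by (intro nn_integral_mono) (auto simp: indicator_def)
  also have "\<dots> = ennreal (\<alpha> * J + \<beta> * V)"
    using E T nonneg
    by (simp add: nn_integral_add nn_integral_cmult nn_integral_cmult_indicator
        ennreal_mult[symmetric] ennreal_plus[symmetric] del: ennreal_plus)
  finally have "V * X \<le> \<alpha> * J + \<beta> * V"
    using E nonneg by (subst (asm) ennreal_le_iff) auto
  then show ?thesis using E by (simp add: field_simps)
qed

lemma abs_le_averaged_Young_split:
  fixes u :: "real^'n::finite \<Rightarrow> real"
  assumes u: "u \<in> Cc_inf (half_space k)" and x: "x \<in> half_space k"
    and pq: "p > 1" "q > 1" "1/p + 1/q = 1" and "e > 0"
    and c: "c = a * q" "0 < c" "c < 1" and b: "b = \<gamma> * q / p" "b < 1"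
    and ap: "a * p > real CARD('n) - 1"
  defines "t \<equiv> x $ k"
    and "I \<equiv> LINT z:half_space k|lborel. norm (grad u z) powr p * (z $ k) powr \<gamma>"
    and "V \<equiv> unit_ball_vol (real CARD('n)) * (x $ k / 2) ^ CARD('n)"
  shows "\<bar>u x\<bar> \<le> e powr p * (2 * t * I / (V * (a * p - real CARD('n) + 1))) / p
    + e powr (-q) * (2 * t * t powr (-b) * beta_bound b c) / q"
proof -
  define d where "d = a * p - real CARD('n) + 1"
  define E where "E = ball (x - (3 * t / 2) *\<^sub>R axis k 1) (t / 2)"
  define T where "T y = (\<integral>\<^sup>+l. indicator {0<..<1} l * (norm (grad u (x + l *\<^sub>R (y - x))) powr p
    * half_space_weight k \<gamma> (x + l *\<^sub>R (y - x)) * l powr (a * p)) \<partial>lborel)" for y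
  define \<alpha> where "\<alpha> = 2 * t * e powr p / p"
  define \<beta> where "\<beta> = 2 * t * e powr (-q) / q * (t powr (-b) * beta_bound b c)"
  have [measurable]: "grad u \<in> borel_measurable borel" using u by measurable
  have t: "t > 0" using x by (simp add: t_def half_space_def)
  have I: "I \<ge> 0" unfolding I_def set_lebesgue_integral_def by (intro integral_nonneg_AE) auto
  have d: "d > 0" using ap by (simp add: d_def)
  have E: "E \<in> sets lborel" "emeasure lborel E = ennreal V" "V > 0"
    using t by (simp_all add: E_def V_def t_def emeasure_ball)
  have "(\<integral>\<^sup>+y. T y \<partial>lborel) = ennreal I * ennreal (1 / d)"
    unfolding T_def d_def
    using nn_integral_segment_homothety[of "\<lambda>z. norm (grad u z) powr p * half_space_weight k \<gamma> z" "a * p" x]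
      nn_integral_weighted_grad_powr[OF u, of p \<gamma>] ap pq
    by (simp add: I_def mult_ac)
  also have "\<dots> = ennreal (I / d)" using I d by (simp add: ennreal_mult[symmetric])
  finally have T_int: "(\<integral>\<^sup>+y. T y \<partial>lborel) = ennreal (I / d)" .
  have "ennreal \<bar>u x\<bar> \<le> ennreal \<alpha> * T y + ennreal \<beta>" if "y \<in> E" for y
  proof -
    have y: "y $ k < 0" "norm (y - x) \<le> 2 * t"
      using lower_ball_subset[of t x k] t that by (auto simp: E_def t_def)
    then have "u y = 0" using Cc_inf_eq_0[OF u] by (simp add: half_space_def)
    from abs_le_Young_split_along_segment[OF u this y(2) pq \<open>e > 0\<close> c(1) b(1)]
    have "ennreal \<bar>u x\<bar> \<le> ennreal \<alpha> * T y + ennreal (2 * t * e powr (-q) / q)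
      * ennreal (t powr (-b) * beta_bound b c)"
      using nn_integral_segment_half_space_weight_le[of x k y b c] t y b c
      by (simp add: \<alpha>_def T_def t_def mult_ac) (meson add_left_mono mult_left_mono order_trans zero_le)
    then show ?thesis using t pq by (simp add: \<beta>_def ennreal_mult'[symmetric])
  qed
  moreover have "\<alpha> \<ge> 0" "\<beta> \<ge> 0" using t pq beta_bound_pos[OF b(2) c(3)] by (simp_all add: \<alpha>_def \<beta>_def)
  ultimately have "\<bar>u x\<bar> \<le> \<alpha> * (I / d) / V + \<beta>"
    using I d by (intro le_of_pointwise_bound_on_set[OF E _ T_int]) (auto simp: T_def)
  also have "\<dots> = e powr p * (2 * t * I / (V * (a * p - real CARD('n) + 1))) / p
      + e powr (-q) * (2 * t * t powr (-b) * beta_bound b c) / q"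
    by (simp add: \<alpha>_def \<beta>_def d_def mult_ac)
  finally show ?thesis .
qed

lemma abs_le_scaled_weighted_energy:
  fixes u :: "real^'n::finite \<Rightarrow> real"
  assumes u: "u \<in> Cc_inf (half_space k)" and x: "x \<in> half_space k"
    and pq: "p > 1" "q > 1" "1/p + 1/q = 1"
    and c: "c = a * q" "0 < c" "c < 1" and b: "b = \<gamma> * q / p" "b < 1"
    and ap: "a * p > real CARD('n) - 1"
  shows "\<bar>u x\<bar> \<le> (2 * 2 ^ CARD('n) / (unit_ball_vol (real CARD('n)) * (a * p - real CARD('n) + 1))) powr (1/p)
      * (2 * beta_bound b c) powr (1/q) * (x $ k) powr (1 - (real CARD('n) + \<gamma>) / p)
      * (LINT z:half_space k|lborel. norm (grad u z) powr p * (z $ k) powr \<gamma>) powr (1/p)"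
proof -
  define n where "n = real CARD('n)"
  define t where "t = x $ k"
  define I where "I = (LINT z:half_space k|lborel. norm (grad u z) powr p * (z $ k) powr \<gamma>)"
  define K1 where "K1 = 2 * 2 ^ CARD('n) / (unit_ball_vol n * (a * p - n + 1))"
  define K2 where "K2 = 2 * beta_bound b c"
  have t: "t > 0" using x by (simp add: t_def half_space_def)
  have I: "I \<ge> 0" unfolding I_def set_lebesgue_integral_def by (intro integral_nonneg_AE) auto
  have K: "K1 > 0" "K2 > 0"
    using ap beta_bound_pos[OF b(2) c(3)] by (simp_all add: K1_def K2_def n_def)
  have A: "2 * t * I / (unit_ball_vol n * (t / 2) ^ CARD('n) * (a * p - n + 1)) = K1 * t powr (1 - n) * I"
    using t by (simp add: K1_def n_def powr_diff powr_realpow power_divide mult_ac)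
  have B: "2 * t * t powr (-b) * beta_bound b c = K2 * t powr (1 - b)"
    using t by (simp add: K2_def powr_diff powr_minus field_simps)
  have "\<bar>u x\<bar> \<le> e powr p * (K1 * t powr (1 - n) * I) / p + e powr (-q) * (K2 * t powr (1 - b)) / q"
    if "e > 0" for e
    using abs_le_averaged_Young_split[OF u x pq that c b ap, folded t_def I_def n_def] unfolding A B .
  then have "\<bar>u x\<bar> \<le> (K1 * t powr (1 - n) * I) powr (1/p) * (K2 * t powr (1 - b)) powr (1/q)"
    using t I K by (intro le_powr_product_if_Young_bounds[OF pq]) auto
  also have "\<dots> = K1 powr (1/p) * K2 powr (1/q) * t powr ((1 - n)/p + (1 - b)/q) * I powr (1/p)"
    using t I K by (simp add: powr_mult powr_powr powr_add mult_ac)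
  also have "(1 - n)/p + (1 - b)/q = 1 - (n + \<gamma>) / p"
    using pq b(1) by (simp add: field_simps)
  finally show ?thesis by (simp add: K1_def K2_def n_def t_def I_def)
qed

theorem lemma2p3:
  fixes p \<gamma> :: real and k :: "'n::finite"
  assumes "real CARD('n) < p" and "\<gamma> < p - 1"
  shows "\<exists>C>0. \<forall>u \<in> Cc_inf (half_space k). \<forall>x \<in> half_space k.
           \<bar>u x\<bar> \<le> C * (x $ k) powr (1 - (real CARD('n) + \<gamma>) / p) *
             (LINT z:half_space k|lborel. norm (grad u z) powr p * (z $ k) powr \<gamma>) powr (1 / p)"
proof -
  define n where "n = real CARD('n)"
  define q where "q = p / (p - 1)"
  \<comment> \<open>the midpoint of the admissible range (n - 1)/p < a < 1/q\<close>
  define a where "a = (n + p - 2) / (2 * p)"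
  define b where "b = \<gamma> * q / p"
  define c where "c = a * q"
  have n: "1 \<le> n" "n < p" using assms(1) by (simp_all add: n_def Suc_le_eq)
  then have p: "p > 1" by linarith
  then have pq: "p > 1" "q > 1" "1/p + 1/q = 1" by (simp_all add: q_def field_simps)
  have c_eq: "c = (n + p - 2) / (2 * (p - 1))" using p by (simp add: c_def a_def q_def field_simps)
  have c: "0 < c" "c < 1" using n p by (simp_all add: c_eq field_simps)
  have "b = \<gamma> / (p - 1)" using p by (simp add: b_def q_def)
  then have b: "b < 1" using assms(2) p by simp
  have ap: "a * p > n - 1" using n p by (simp add: a_def field_simps)
  define C where "C = (2 * 2 ^ CARD('n) / (unit_ball_vol n * (a * p - n + 1))) powr (1/p)
    * (2 * beta_bound b c) powr (1/q)"
  have "unit_ball_vol n > 0" "a * p - n + 1 > 0" using n ap by simp_all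
  then have "C > 0" using beta_bound_pos[OF b c(2)] by (simp add: C_def)
  then show ?thesis
    using abs_le_scaled_weighted_energy[OF _ _ pq c_def c b_def b ap[unfolded n_def]]
    unfolding C_def n_def by blast
qed

end
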